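(* Let $\oplus$ be a combinator whose domain is the set of all pairs of tpos over $W$. Then $\oplus$ is a TeamQueue combinator if and only if $\oplus$ is basic and satisfies ($\oplus$TRI): for every pair $\langle\preceq_1,\preceq_2\rangle$ and every $S \subseteq W$, $\min(\preceq_{1\oplus 2}, S)$ is equal to one of $\min(\preceq_1, S)$, $\min(\preceq_2, S)$, or $\min(\preceq_1, S) \cup \min(\preceq_2, S)$.
   Context: $W$ is a finite nonempty set (of possible worlds). A tpo is a total preorder on $W$. For $S \subseteq W$, $\min(\preceq, S) = \{x \in S : x \preceq y \text{ for all } y \in S\}$. A combinator $\oplus$ maps pairs of tpos $\langle\preceq_1,\preceq_2\rangle$ in its domain to a tpo $\preceq_{1\oplus 2}$. It is basic if $\min(\preceq_{1\oplus 2}, W) = \min(\preceq_1, W) \cup \min(\preceq_2, W)$ for every pair in its domain. $\oplus$ is a TeamQueue combinator if for each pair $\langle\preceq_1,\preceq_2\rangle$ in its domain there is a sequence $\langle a(i)\rangle_{i \in \mathbb{N}}$ (depending on the pair) with $\emptyset \neq a(i) \subseteq \{1,2\}$ for all $i$ and $a(1) = \{1,2\}$, such that $\preceq_{1\oplus 2}$ is the tpo whose ordered partition into ranks (most plausible first) is $\langle T_1, \ldots, T_m\rangle$, where inductively $T_i = \bigcup_{j \in a(i)} \min(\preceq_j, \bigcap_{k<i} T_k^c)$ ($T^c$ the complement in $W$) and $m$ is minimal with $\bigcup_{i \le m} T_i = W$. *)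

theory Defs
  imports Main
begin

text \<open>The set W of worlds is modelled by a finite type 'w (types are nonempty).
  A relation R relates x to y when x is at least as plausible as y (x \<preceq> y).\<close>

definition tpo :: "'w rel \<Rightarrow> bool" where
  "tpo R \<longleftrightarrow> (\<forall>x y. (x, y) \<in> R \<or> (y, x) \<in> R) \<and> trans R"

definition minS :: "'w rel \<Rightarrow> 'w set \<Rightarrow> 'w set" where
  "minS R S = {x \<in> S. \<forall>y \<in> S. (x, y) \<in> R}"

definition pick :: "'w rel \<Rightarrow> 'w rel \<Rightarrow> nat \<Rightarrow> 'w rel" where
  "pick R1 R2 j = (if j = 1 then R1 else R2)"

text \<open>tq_rest R1 R2 a i = complement of T_1 \<union> ... \<union> T_i (so tq_rest _ _ _ 0 = W).\<close>
primrec tq_rest :: "'w rel \<Rightarrow> 'w rel \<Rightarrow> (nat \<Rightarrow> nat set) \<Rightarrow> nat \<Rightarrow> 'w set" where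
  "tq_rest R1 R2 a 0 = UNIV"
| "tq_rest R1 R2 a (Suc i) =
     tq_rest R1 R2 a i - (\<Union>j \<in> a (Suc i). minS (pick R1 R2 j) (tq_rest R1 R2 a i))"

definition tq_T :: "'w rel \<Rightarrow> 'w rel \<Rightarrow> (nat \<Rightarrow> nat set) \<Rightarrow> nat \<Rightarrow> 'w set" where
  "tq_T R1 R2 a i = (\<Union>j \<in> a i. minS (pick R1 R2 j) (tq_rest R1 R2 a (i - 1)))"

definition combinator :: "('w rel \<Rightarrow> 'w rel \<Rightarrow> 'w rel) \<Rightarrow> bool" where
  "combinator c \<longleftrightarrow> (\<forall>R1 R2. tpo R1 \<longrightarrow> tpo R2 \<longrightarrow> tpo (c R1 R2))"

definition basic :: "('w rel \<Rightarrow> 'w rel \<Rightarrow> 'w rel) \<Rightarrow> bool" where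
  "basic c \<longleftrightarrow> (\<forall>R1 R2. tpo R1 \<longrightarrow> tpo R2 \<longrightarrow>
      minS (c R1 R2) UNIV = minS R1 UNIV \<union> minS R2 UNIV)"

definition TRI :: "('w rel \<Rightarrow> 'w rel \<Rightarrow> 'w rel) \<Rightarrow> bool" where
  "TRI c \<longleftrightarrow> (\<forall>R1 R2 S. tpo R1 \<longrightarrow> tpo R2 \<longrightarrow>
      minS (c R1 R2) S = minS R1 S \<or> minS (c R1 R2) S = minS R2 S \<or>
      minS (c R1 R2) S = minS R1 S \<union> minS R2 S)"

text \<open>The tpo whose ordered partition into ranks is T_1, ..., T_m with m minimal
  such that T_1 \<union> ... \<union> T_m = W (layers beyond m are empty).\<close>
definition teamqueue :: "('w rel \<Rightarrow> 'w rel \<Rightarrow> 'w rel) \<Rightarrow> bool" where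
  "teamqueue c \<longleftrightarrow> (\<forall>R1 R2. tpo R1 \<longrightarrow> tpo R2 \<longrightarrow>
     (\<exists>a :: nat \<Rightarrow> nat set.
        (\<forall>i \<ge> 1. a i \<noteq> {} \<and> a i \<subseteq> {1, 2}) \<and> a 1 = {1, 2} \<and>
        (\<exists>m. (\<Union>i \<in> {1..m}. tq_T R1 R2 a i) = UNIV) \<and>
        c R1 R2 = {(x, y). \<exists>i j. 1 \<le> i \<and> i \<le> j \<and> x \<in> tq_T R1 R2 a i \<and> y \<in> tq_T R1 R2 a j}))"

end

theory Submission
  imports Defs
begin

text \<open>A TeamQueue order ranks worlds by the first layer containing them, so the minimum of
  \<open>S\<close> is \<open>S \<inter> T\<^sub>k\<close> for the first layer \<open>T\<^sub>k\<close> meeting \<open>S\<close>. Since \<open>S\<close> lies in the remainder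
  \<open>W - (T\<^sub>1 \<union> \<dots> \<union> T\<^sub>k\<^sub>-\<^sub>1)\<close> and \<open>T\<^sub>k\<close> is the union of the minima of the selected input
  orders on that remainder, \<open>S \<inter> T\<^sub>k\<close> is \<open>min(\<preceq>\<^sub>1,S)\<close>, \<open>min(\<preceq>\<^sub>2,S)\<close> or their union;
  with \<open>T\<^sub>1 = min(\<preceq>\<^sub>1,W) \<union> min(\<preceq>\<^sub>2,W)\<close> this gives basicness and (\<open>\<oplus>\<close>TRI).
  Conversely every tpo is the layer order of its own ranks, obtained by repeatedly removing
  minima, and (\<open>\<oplus>\<close>TRI) applied to the remainders says which input orders produce each rank;
  basicness makes the first choice \<open>{1,2}\<close>.\<close>

lemma minS_subset: "minS R S \<subseteq> S"
  unfolding minS_def by auto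

lemma minS_nonempty:
  assumes "tpo R" "finite S" "S \<noteq> {}"
  shows "minS R S \<noteq> {}"
  using assms(2,3)
proof (induction S rule: finite_ne_induct)
  case (singleton x)
  then show ?case using assms(1) unfolding tpo_def minS_def by auto
next
  case (insert x F)
  then obtain m where m: "m \<in> minS R F" by blast
  show ?case
  proof (cases "(m, x) \<in> R")
    case True
    then have "m \<in> minS R (insert x F)" using m unfolding minS_def by auto
    then show ?thesis by blast
  next
    case False
    then have "(x, m) \<in> R" using assms(1) unfolding tpo_def by blast
    then have "x \<in> minS R (insert x F)"
      using m assms(1) unfolding tpo_def minS_def trans_def by blast
    then show ?thesis by blast
  qed
qed

lemma minS_subset_eq:
  assumes "tpo R" "S \<subseteq> T" "S \<inter> minS R T \<noteq> {}"
  shows "minS R S = S \<inter> minS R T"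
proof
  obtain y where y: "y \<in> S" "y \<in> minS R T" using assms(3) by blast
  show "minS R S \<subseteq> S \<inter> minS R T"
  proof
    fix x assume x: "x \<in> minS R S"
    then have "(x, y) \<in> R" using y unfolding minS_def by auto
    then have "\<forall>z\<in>T. (x, z) \<in> R" using y assms(1) unfolding tpo_def minS_def trans_def by blast
    then show "x \<in> S \<inter> minS R T" using x assms(2) unfolding minS_def by auto
  qed
  show "S \<inter> minS R T \<subseteq> minS R S" using assms(2) unfolding minS_def by auto
qed

lemma tpo_pick: "tpo R1 \<Longrightarrow> tpo R2 \<Longrightarrow> tpo (pick R1 R2 j)"
  by (simp add: pick_def)

definition layer_order :: "(nat \<Rightarrow> 'w set) \<Rightarrow> 'w rel" where
  "layer_order T = {(x, y). \<exists>i j. 1 \<le> i \<and> i \<le> j \<and> x \<in> T i \<and> y \<in> T j}"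

definition teamqueue_of :: "'w rel \<Rightarrow> 'w rel \<Rightarrow> 'w rel \<Rightarrow> bool" where
  "teamqueue_of R1 R2 C \<longleftrightarrow> (\<exists>a.
     (\<forall>i\<ge>1. a i \<noteq> {} \<and> a i \<subseteq> {1, 2}) \<and> a 1 = {1, 2} \<and>
     (\<exists>m. (\<Union>i\<in>{1..m}. tq_T R1 R2 a i) = UNIV) \<and> C = layer_order (tq_T R1 R2 a))"

lemma teamqueue_iff_teamqueue_of:
  "teamqueue c \<longleftrightarrow> (\<forall>R1 R2. tpo R1 \<longrightarrow> tpo R2 \<longrightarrow> teamqueue_of R1 R2 (c R1 R2))"
  unfolding teamqueue_def teamqueue_of_def layer_order_def by (rule refl)

lemma minS_layer_order:
  assumes "1 \<le> k" "S \<inter> T k \<noteq> {}"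
    and before: "\<And>i. 1 \<le> i \<Longrightarrow> i < k \<Longrightarrow> S \<inter> T i = {}"
    and disjoint: "\<And>x i j. x \<in> T i \<Longrightarrow> x \<in> T j \<Longrightarrow> 1 \<le> i \<Longrightarrow> 1 \<le> j \<Longrightarrow> i = j"
    and cover: "\<And>x. \<exists>i\<ge>1. x \<in> T i"
  shows "minS (layer_order T) S = S \<inter> T k"
proof
  obtain y where y: "y \<in> S" "y \<in> T k" using assms(2) by blast
  show "minS (layer_order T) S \<subseteq> S \<inter> T k"
  proof
    fix x assume x: "x \<in> minS (layer_order T) S"
    then obtain i j where ij: "1 \<le> i" "i \<le> j" "x \<in> T i" "y \<in> T j" "x \<in> S"
      using y unfolding minS_def layer_order_def by blast
    have "j = k" using disjoint[OF ij(4) y(2)] ij assms(1) by simp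
    moreover have "\<not> i < k" using before[of i] ij by blast
    ultimately show "x \<in> S \<inter> T k" using ij by simp
  qed
  show "S \<inter> T k \<subseteq> minS (layer_order T) S"
  proof
    fix x assume x: "x \<in> S \<inter> T k"
    have "(x, z) \<in> layer_order T" if "z \<in> S" for z
    proof -
      obtain j where j: "1 \<le> j" "z \<in> T j" using cover by blast
      then have "k \<le> j" using before[of j] that by force
      then show ?thesis using x j assms(1) unfolding layer_order_def by blast
    qed
    then show "x \<in> minS (layer_order T) S" using x unfolding minS_def by blast
  qed
qed

lemma tq_rest_Suc: "tq_rest R1 R2 a (Suc k) = tq_rest R1 R2 a k - tq_T R1 R2 a (Suc k)"
  by (simp add: tq_T_def)

lemma tq_T_subset: "tq_T R1 R2 a i \<subseteq> tq_rest R1 R2 a (i - 1)"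
  unfolding tq_T_def by (intro UN_least minS_subset)

lemma tq_rest_antimono: "i \<le> j \<Longrightarrow> tq_rest R1 R2 a j \<subseteq> tq_rest R1 R2 a i"
  by (induction j rule: dec_induct) auto

lemma mem_tq_rest_iff: "x \<in> tq_rest R1 R2 a k \<longleftrightarrow> (\<forall>i\<in>{1..k}. x \<notin> tq_T R1 R2 a i)"
proof (induction k)
  case (Suc k)
  have "{1..Suc k} = insert (Suc k) {1..k}" by auto
  then show ?case using Suc tq_rest_Suc[of R1 R2 a k] by auto
qed simp

lemma tq_T_disjoint:
  assumes "x \<in> tq_T R1 R2 a i" "x \<in> tq_T R1 R2 a j" "1 \<le> i" "1 \<le> j"
  shows "i = j"
proof -
  have "x \<notin> tq_T R1 R2 a i" if "x \<in> tq_T R1 R2 a j" "1 \<le> i" "i < j" for i j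
  proof -
    have "x \<in> tq_rest R1 R2 a (j - 1)" using that(1) tq_T_subset[of R1 R2 a j] by blast
    moreover have "tq_rest R1 R2 a (j - 1) \<subseteq> tq_rest R1 R2 a i"
      using that(3) by (intro tq_rest_antimono) simp
    ultimately have "x \<in> tq_rest R1 R2 a i" by blast
    then show ?thesis using that(2) by (simp add: mem_tq_rest_iff)
  qed
  then show ?thesis using assms by (cases i j rule: linorder_cases) blast+
qed

text \<open>Each step removes a nonempty set of minima, so the layers exhaust a finite \<open>W\<close>
  after at most \<open>|W|\<close> steps.\<close>
lemma tq_rest_card_empty:
  fixes R1 R2 :: "'w::finite rel"
  assumes "tpo R1" "tpo R2" "\<forall>i\<ge>1. a i \<noteq> {}"
  shows "tq_rest R1 R2 a (card (UNIV :: 'w set)) = {}"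
proof -
  have "tq_rest R1 R2 a k = {} \<or> card (tq_rest R1 R2 a k) + k \<le> card (UNIV :: 'w set)" for k
  proof (induction k)
    case (Suc k)
    show ?case
    proof (cases "tq_rest R1 R2 a k = {}")
      case False
      obtain j where "j \<in> a (Suc k)" using assms(3) by fastforce
      then have "minS (pick R1 R2 j) (tq_rest R1 R2 a k) \<subseteq> tq_T R1 R2 a (Suc k)"
        unfolding tq_T_def by auto
      moreover have "minS (pick R1 R2 j) (tq_rest R1 R2 a k) \<noteq> {}"
        using minS_nonempty[OF tpo_pick[OF assms(1,2)]] False by simp
      moreover have "minS (pick R1 R2 j) (tq_rest R1 R2 a k) \<subseteq> tq_rest R1 R2 a k"
        by (rule minS_subset)
      ultimately have "tq_rest R1 R2 a (Suc k) \<subset> tq_rest R1 R2 a k"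
        unfolding tq_rest_Suc by blast
      then have "card (tq_rest R1 R2 a (Suc k)) < card (tq_rest R1 R2 a k)"
        by (simp add: psubset_card_mono)
      then show ?thesis using Suc.IH False by linarith
    qed simp
  qed simp
  then have "card (tq_rest R1 R2 a (card (UNIV :: 'w set))) = 0 \<or>
      tq_rest R1 R2 a (card (UNIV :: 'w set)) = {}"
    by fastforce
  then show ?thesis by simp
qed

lemma UN_tq_T_eq_UNIV_iff: "(\<Union>i\<in>{1..m}. tq_T R1 R2 a i) = UNIV \<longleftrightarrow> tq_rest R1 R2 a m = {}"
  using mem_tq_rest_iff[of _ R1 R2 a m] by blast

lemma minS_tq_layer_order_eq:
  assumes cover: "\<And>x. \<exists>i\<ge>1. x \<in> tq_T R1 R2 a i"
    and "1 \<le> k" "S \<inter> tq_T R1 R2 a k \<noteq> {}"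
    and "\<And>i. 1 \<le> i \<Longrightarrow> i < k \<Longrightarrow> S \<inter> tq_T R1 R2 a i = {}"
  shows "minS (layer_order (tq_T R1 R2 a)) S = S \<inter> tq_T R1 R2 a k"
proof (rule minS_layer_order)
  show "i = j" if "x \<in> tq_T R1 R2 a i" "x \<in> tq_T R1 R2 a j" "1 \<le> i" "1 \<le> j" for x i j
    using that by (rule tq_T_disjoint)
qed (use assms in auto)

lemma minS_tq_layer_order:
  assumes cover: "\<And>x. \<exists>i\<ge>1. x \<in> tq_T R1 R2 a i" and "S \<noteq> {}"
  obtains k where "1 \<le> k" "S \<subseteq> tq_rest R1 R2 a (k - 1)"
    "S \<inter> tq_T R1 R2 a k \<noteq> {}" "minS (layer_order (tq_T R1 R2 a)) S = S \<inter> tq_T R1 R2 a k"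
proof -
  let ?P = "\<lambda>i. 1 \<le> i \<and> S \<inter> tq_T R1 R2 a i \<noteq> {}"
  have "\<exists>i. ?P i" using cover assms(2) by blast
  define k where "k = (LEAST i. ?P i)"
  have "?P k" unfolding k_def by (rule LeastI_ex) fact
  then have k: "1 \<le> k" "S \<inter> tq_T R1 R2 a k \<noteq> {}" by auto
  have before: "S \<inter> tq_T R1 R2 a i = {}" if "1 \<le> i" "i < k" for i
    using not_less_Least[of i ?P] that unfolding k_def by blast
  then have "S \<subseteq> tq_rest R1 R2 a (k - 1)" by (force simp: mem_tq_rest_iff)
  moreover have "minS (layer_order (tq_T R1 R2 a)) S = S \<inter> tq_T R1 R2 a k"
    using minS_tq_layer_order_eq[OF cover k] before by blast
  ultimately show ?thesis using k that by blast
qed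

text \<open>Each input minimum on the remainder \<open>r\<close> either misses \<open>S \<subseteq> r\<close> or cuts out exactly
  its minimum on \<open>S\<close>.\<close>
lemma Int_minS_trichotomy:
  assumes "tpo R1" "tpo R2" "S \<subseteq> r" "J \<noteq> {}" "J \<subseteq> {1, 2}"
    and nonempty: "S \<inter> (\<Union>j\<in>J. minS (pick R1 R2 j) r) \<noteq> {}"
  shows "S \<inter> (\<Union>j\<in>J. minS (pick R1 R2 j) r) \<in> {minS R1 S, minS R2 S, minS R1 S \<union> minS R2 S}"
proof -
  have "S \<inter> minS R1 r = {} \<or> S \<inter> minS R1 r = minS R1 S"
    using minS_subset_eq[OF assms(1,3)] by blast
  moreover have "S \<inter> minS R2 r = {} \<or> S \<inter> minS R2 r = minS R2 S"
    using minS_subset_eq[OF assms(2,3)] by blast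
  moreover have "J = {1} \<or> J = {2} \<or> J = {1, 2}" using assms(4,5) by blast
  ultimately show ?thesis using nonempty by (elim disjE) (simp_all add: pick_def Int_Un_distrib)
qed

lemma tq_layer_order_basic:
  fixes R1 R2 :: "'w::finite rel"
  assumes "tpo R1" "tpo R2" "a 1 = {1, 2}"
    and cover: "\<And>x. \<exists>i\<ge>1. x \<in> tq_T R1 R2 a i"
  shows "minS (layer_order (tq_T R1 R2 a)) UNIV = minS R1 UNIV \<union> minS R2 UNIV"
proof -
  have T1: "tq_T R1 R2 a 1 = minS R1 UNIV \<union> minS R2 UNIV"
    using assms(3) by (simp add: tq_T_def pick_def)
  then have "UNIV \<inter> tq_T R1 R2 a 1 \<noteq> {}" using minS_nonempty[OF assms(1), of UNIV] by simp
  then show ?thesis using minS_tq_layer_order_eq[OF cover, of 1 UNIV] T1 by simp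
qed

lemma tq_layer_order_trichotomy:
  fixes R1 R2 :: "'w rel"
  assumes "tpo R1" "tpo R2" "\<forall>i\<ge>1. a i \<noteq> {} \<and> a i \<subseteq> {1, 2}"
    and cover: "\<And>x. \<exists>i\<ge>1. x \<in> tq_T R1 R2 a i"
  defines "L \<equiv> layer_order (tq_T R1 R2 a)"
  shows "minS L S = minS R1 S \<or> minS L S = minS R2 S \<or> minS L S = minS R1 S \<union> minS R2 S"
proof (cases "S = {}")
  case False
  then obtain k where k: "1 \<le> k" "S \<subseteq> tq_rest R1 R2 a (k - 1)"
    "S \<inter> tq_T R1 R2 a k \<noteq> {}" and minL: "minS L S = S \<inter> tq_T R1 R2 a k"
    using minS_tq_layer_order[OF cover] unfolding L_def by blast
  have "a k \<noteq> {}" "a k \<subseteq> {1, 2}" using assms(3) k(1) by auto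
  then have "S \<inter> tq_T R1 R2 a k \<in> {minS R1 S, minS R2 S, minS R1 S \<union> minS R2 S}"
    using Int_minS_trichotomy[OF assms(1,2) k(2)] k(3) by (simp add: tq_T_def)
  then show ?thesis unfolding minL by blast
qed (simp add: minS_def)

lemma minS_if_le_minS:
  assumes "tpo C" "y \<in> minS C S" "x \<in> S" "(x, y) \<in> C"
  shows "x \<in> minS C S"
  using assms unfolding tpo_def trans_def minS_def by blast

text \<open>The ranks of a tpo \<open>C\<close> are the TeamQueue layers of the pair \<open>\<langle>C, C\<rangle>\<close>.\<close>
abbreviation rank_rest :: "'w rel \<Rightarrow> nat \<Rightarrow> 'w set" where
  "rank_rest C \<equiv> tq_rest C C (\<lambda>_. {1})"

abbreviation ranks :: "'w rel \<Rightarrow> nat \<Rightarrow> 'w set" where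
  "ranks C \<equiv> tq_T C C (\<lambda>_. {1})"

lemma ranks_eq: "ranks C i = minS C (rank_rest C (i - 1))"
  by (simp add: tq_T_def pick_def)

lemma ranks_cover:
  fixes C :: "'w::finite rel"
  assumes "tpo C"
  shows "\<exists>i\<ge>1. x \<in> ranks C i"
proof -
  have "x \<notin> rank_rest C (card (UNIV :: 'w set))"
    using tq_rest_card_empty[OF assms assms, of "\<lambda>_. {1}"] by simp
  then show ?thesis by (auto simp: mem_tq_rest_iff)
qed

lemma tpo_eq_layer_order_ranks:
  fixes C :: "'w::finite rel"
  assumes "tpo C"
  shows "C = layer_order (ranks C)"
proof (intro set_eqI iffI)
  fix p assume "p \<in> C"
  then obtain x y where p: "p = (x, y)" "(x, y) \<in> C" by (cases p) auto
  obtain i j where ij: "1 \<le> i" "x \<in> ranks C i" "1 \<le> j" "y \<in> ranks C j"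
    using ranks_cover[OF assms] by blast
  have "i \<le> j"
  proof (rule ccontr)
    assume "\<not> i \<le> j"
    then have "rank_rest C (i - 1) \<subseteq> rank_rest C (j - 1)" by (intro tq_rest_antimono) simp
    then have "x \<in> rank_rest C (j - 1)" using ij(2) tq_T_subset[of C C _ i] by blast
    then have "x \<in> ranks C j"
      using minS_if_le_minS[OF assms] ij(4) p(2) unfolding ranks_eq by blast
    then show False using tq_T_disjoint[OF ij(2) _ ij(1,3)] \<open>\<not> i \<le> j\<close> by simp
  qed
  then show "p \<in> layer_order (ranks C)" using ij p(1) unfolding layer_order_def by blast
next
  fix p assume "p \<in> layer_order (ranks C)"
  then obtain x y i j where p: "p = (x, y)"
    and ij: "1 \<le> i" "i \<le> j" "x \<in> ranks C i" "y \<in> ranks C j"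
    unfolding layer_order_def by blast
  have "rank_rest C (j - 1) \<subseteq> rank_rest C (i - 1)" using ij(2) by (intro tq_rest_antimono) simp
  then have "y \<in> rank_rest C (i - 1)" using ij(4) tq_T_subset[of C C _ j] by blast
  then show "p \<in> C" using ij(3) p unfolding ranks_eq minS_def by blast
qed

text \<open>Testing the union first makes the choice at \<open>S = W\<close> equal to \<open>{1, 2}\<close> when \<open>C\<close> is
  basic.\<close>
definition team_choice :: "'w rel \<Rightarrow> 'w rel \<Rightarrow> 'w rel \<Rightarrow> 'w set \<Rightarrow> nat set" where
  "team_choice C R1 R2 S =
     (if minS C S = minS R1 S \<union> minS R2 S then {1, 2}
      else if minS C S = minS R1 S then {1} else {2})"

lemma team_choice_subset: "team_choice C R1 R2 S \<noteq> {} \<and> team_choice C R1 R2 S \<subseteq> {1, 2}"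
  unfolding team_choice_def by auto

lemma UN_team_choice_minS:
  assumes "minS C S = minS R1 S \<or> minS C S = minS R2 S \<or> minS C S = minS R1 S \<union> minS R2 S"
  shows "(\<Union>j\<in>team_choice C R1 R2 S. minS (pick R1 R2 j) S) = minS C S"
  using assms unfolding team_choice_def by (auto simp: pick_def)

lemma teamqueue_of_if_trichotomy:
  fixes R1 R2 C :: "'w::finite rel"
  assumes "tpo R1" "tpo R2" "tpo C"
    and basic: "minS C UNIV = minS R1 UNIV \<union> minS R2 UNIV"
    and trichotomy: "\<And>S. minS C S = minS R1 S \<or> minS C S = minS R2 S \<or>
      minS C S = minS R1 S \<union> minS R2 S"
  shows "teamqueue_of R1 R2 C"
proof -
  define a where "a = (\<lambda>i. team_choice C R1 R2 (rank_rest C (i - 1)))"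
  note choice = UN_team_choice_minS[OF trichotomy]
  have rest: "tq_rest R1 R2 a i = rank_rest C i" for i
  proof (induction i)
    case (Suc i)
    then have "tq_rest R1 R2 a (Suc i) = rank_rest C i - minS C (rank_rest C i)"
      using choice by (simp add: a_def)
    then show ?case by (simp add: pick_def)
  qed simp
  have "tq_T R1 R2 a i = ranks C i" for i
    unfolding ranks_eq tq_T_def rest using choice by (simp add: a_def)
  then have "tq_T R1 R2 a = ranks C" ..
  then have order: "C = layer_order (tq_T R1 R2 a)"
    using tpo_eq_layer_order_ranks[OF assms(3)] by (simp only:)
  have range: "\<forall>i\<ge>1. a i \<noteq> {} \<and> a i \<subseteq> {1, 2}"
    unfolding a_def using team_choice_subset by blast
  have "tq_rest R1 R2 a (card (UNIV :: 'w set)) = {}"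
    by (rule tq_rest_card_empty[OF assms(1,2)]) (use range in blast)
  then have cover: "(\<Union>i\<in>{1..card (UNIV :: 'w set)}. tq_T R1 R2 a i) = UNIV"
    by (simp only: UN_tq_T_eq_UNIV_iff)
  have "a 1 = {1, 2}" using basic by (simp add: a_def team_choice_def)
  with order range cover show ?thesis unfolding teamqueue_of_def by blast
qed

lemma teamqueue_of_iff:
  fixes R1 R2 C :: "'w::finite rel"
  assumes "tpo R1" "tpo R2" "tpo C"
  shows "teamqueue_of R1 R2 C \<longleftrightarrow> minS C UNIV = minS R1 UNIV \<union> minS R2 UNIV \<and>
    (\<forall>S. minS C S = minS R1 S \<or> minS C S = minS R2 S \<or> minS C S = minS R1 S \<union> minS R2 S)"
proof
  assume "teamqueue_of R1 R2 C"
  then obtain a m where a: "\<forall>i\<ge>1. a i \<noteq> {} \<and> a i \<subseteq> {1, 2}" "a 1 = {1, 2}"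
    and m: "(\<Union>i\<in>{1..m}. tq_T R1 R2 a i) = UNIV" and C_eq: "C = layer_order (tq_T R1 R2 a)"
    unfolding teamqueue_of_def by blast
  have cover: "\<exists>i\<ge>1. x \<in> tq_T R1 R2 a i" for x
    using m by (metis UNIV_I UN_E atLeastAtMost_iff)
  show "minS C UNIV = minS R1 UNIV \<union> minS R2 UNIV \<and>
    (\<forall>S. minS C S = minS R1 S \<or> minS C S = minS R2 S \<or> minS C S = minS R1 S \<union> minS R2 S)"
    unfolding C_eq using tq_layer_order_basic[OF assms(1,2) a(2) cover]
      tq_layer_order_trichotomy[OF assms(1,2) a(1) cover] by blast
qed (use teamqueue_of_if_trichotomy[OF assms] in blast)

theorem proposition4:
  fixes c :: "'w::finite rel \<Rightarrow> 'w rel \<Rightarrow> 'w rel"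
  assumes "combinator c"
  shows "teamqueue c \<longleftrightarrow> basic c \<and> TRI c"
proof -
  have tpo_c: "tpo R1 \<Longrightarrow> tpo R2 \<Longrightarrow> tpo (c R1 R2)" for R1 R2
    using assms unfolding combinator_def by blast
  have "teamqueue c \<longleftrightarrow> (\<forall>R1 R2. tpo R1 \<longrightarrow> tpo R2 \<longrightarrow>
      minS (c R1 R2) UNIV = minS R1 UNIV \<union> minS R2 UNIV \<and>
      (\<forall>S. minS (c R1 R2) S = minS R1 S \<or> minS (c R1 R2) S = minS R2 S \<or>
        minS (c R1 R2) S = minS R1 S \<union> minS R2 S))"
    unfolding teamqueue_iff_teamqueue_of by (simp add: teamqueue_of_iff tpo_c)
  also have "\<dots> \<longleftrightarrow> basic c \<and> TRI c"
    unfolding basic_def TRI_def by blast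
  finally show ?thesis .
qed

end
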